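(* Let $k\ge 2$ be a fixed integer. For $n\ge 1$, let $Y_n$ be the random variable counting the indices $i$ with $1\le i\le n-k+1$ such that $p_i<p_{i+1}<\cdots<p_{i+k-1}$, where $p=p_1\cdots p_n$ is a permutation chosen uniformly at random among all permutations of length $n$. Then there exists a constant $c>0$ (depending only on $k$) such that for all $n\ge k$, \[\operatorname{Var}(Y_n)\ge c\,n.\]
   Context: Each permutation of length $n$ is selected with probability $1/n!$. *)

theory Defs
  imports "HOL-Probability.Probability"
begin

text \<open>A permutation of length n is a bijection p of {1..n} (identity outside),
  i.e. p permutes {1..n}; p_i is p i.\<close>

definition perms :: "nat \<Rightarrow> (nat \<Rightarrow> nat) set" where
  "perms n = {p. p permutes {1..n}}"

definition unif_perm :: "nat \<Rightarrow> (nat \<Rightarrow> nat) pmf" where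
  "unif_perm n = pmf_of_set (perms n)"

definition Y :: "nat \<Rightarrow> nat \<Rightarrow> (nat \<Rightarrow> nat) \<Rightarrow> real" where
  "Y k n p = real (card {i. 1 \<le> i \<and> i + k - 1 \<le> n \<and>
                          (\<forall>j. i \<le> j \<and> j < i + k - 1 \<longrightarrow> p j < p (j + 1))})"

end

theory Submission
  imports Defs
begin

text \<open>Take \<open>R = \<lfloor>(n + k) / 2k\<rfloor> \<ge> n / 3k\<close> windows \<open>W\<^sub>t = [2tk, 2tk + k + 1]\<close> of \<open>k + 2\<close>
  consecutive positions, pairwise more than two positions apart, and let \<open>A\<^sub>t\<close> be the event
  that \<open>p\<close> ascends on \<open>W\<^sub>t\<close>; by sorting the values on \<open>W\<^sub>t\<close>, \<open>P(A\<^sub>t) \<ge> 1/(k+2)!\<close>.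
  Swapping the values at positions \<open>2tk + 1\<close> and \<open>2tk + 2\<close> is a measure-preserving involution;
  let \<open>h\<^sub>t\<close> be the indicator of \<open>A\<^sub>t\<close> minus the indicator of \<open>A\<^sub>t\<close> after this swap. Each \<open>h\<^sub>t\<close>
  is odd under its own swap and invariant under the others, so the \<open>h\<^sub>t\<close> are centred and
  orthogonal with \<open>E h\<^sub>t\<^sup>2 = 2 P(A\<^sub>t)\<close>. On \<open>A\<^sub>t\<close> the swap destroys the rising run starting
  at \<open>2tk + 1\<close> and creates none, whence \<open>E (Y h\<^sub>t) \<ge> P(A\<^sub>t)/2\<close>. With \<open>Z = \<Sum>\<^sub>t h\<^sub>t\<close>,
  \<open>0 \<le> E (Y - E Y - Z/4)\<^sup>2\<close> gives \<open>Var Y \<ge> \<Sum>\<^sub>t P(A\<^sub>t) / 8 \<ge> R / (8 (k+2)!)\<close>.\<close>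

definition ascending :: "nat \<Rightarrow> nat \<Rightarrow> (nat \<Rightarrow> nat) \<Rightarrow> bool" where
  "ascending l u p \<longleftrightarrow> (\<forall>j. l \<le> j \<longrightarrow> j < u \<longrightarrow> p j < p (Suc j))"

definition rising_windows :: "nat \<Rightarrow> nat \<Rightarrow> (nat \<Rightarrow> nat) \<Rightarrow> nat set" where
  "rising_windows k n p = {i. 1 \<le> i \<and> i + k - 1 \<le> n \<and> ascending i (i + k - 1) p}"

definition adj_swap :: "nat \<Rightarrow> (nat \<Rightarrow> nat) \<Rightarrow> nat \<Rightarrow> nat" where
  "adj_swap a p = (\<lambda>x. if x = a then p (Suc a) else if x = Suc a then p a else p x)"

lemma Y_eq_card_rising_windows: "Y k n p = real (card (rising_windows k n p))"
  unfolding Y_def rising_windows_def ascending_def by (simp add: imp_conjL)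

lemma finite_rising_windows: "finite (rising_windows k n p)"
  by (rule finite_subset[of _ "{1..n+1}"]) (auto simp: rising_windows_def)

lemma adj_swap_adj_swap [simp]: "adj_swap a (adj_swap a p) = p"
  by (auto simp: adj_swap_def fun_eq_iff)

lemma adj_swap_commute:
  assumes "Suc a < b \<or> Suc b < a"
  shows "adj_swap a (adj_swap b p) = adj_swap b (adj_swap a p)"
  using assms by (auto simp: adj_swap_def fun_eq_iff)

lemma adj_swap_in_perms:
  assumes "p \<in> perms n" "1 \<le> a" "Suc a \<le> n"
  shows "adj_swap a p \<in> perms n"
proof -
  have "adj_swap a p = p \<circ> Transposition.transpose a (Suc a)"
    by (auto simp: adj_swap_def fun_eq_iff transpose_def)
  moreover have "Transposition.transpose a (Suc a) permutes {1..n}"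
    using assms by (intro permutes_swap_id) auto
  ultimately show ?thesis
    using assms(1) unfolding perms_def by (auto intro: permutes_compose)
qed

lemma sum_perms_adj_swap:
  assumes "1 \<le> a" "Suc a \<le> n"
  shows "(\<Sum>p\<in>perms n. f (adj_swap a p)) = (\<Sum>p\<in>perms n. f p)"
  by (rule sum.reindex_bij_witness[of _ "adj_swap a" "adj_swap a"])
    (use assms adj_swap_in_perms in auto)

lemma ascending_cong:
  assumes "\<And>x. l \<le> x \<Longrightarrow> x \<le> u \<Longrightarrow> p x = q x"
  shows "ascending l u p \<longleftrightarrow> ascending l u q"
  unfolding ascending_def using assms by (metis Suc_leI less_imp_le_nat order.trans le_SucI)

lemma ascending_adj_swap_far:
  assumes "Suc b < l \<or> u < b"
  shows "ascending l u (adj_swap b p) \<longleftrightarrow> ascending l u p"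
  by (rule ascending_cong) (use assms in \<open>auto simp: adj_swap_def\<close>)

lemma not_ascending_adj_swap:
  assumes "l \<le> a" "a < u" "ascending l u p"
  shows "\<not> ascending l u (adj_swap a p)"
  using assms unfolding ascending_def adj_swap_def
  by (metis (full_types) less_not_sym n_not_Suc_n)

text \<open>No rising window is created because the steps at \<open>a - 1\<close> and \<open>a + 1\<close> stay ascending.\<close>
lemma rising_windows_adj_swap:
  assumes k: "k \<ge> 2" and a: "1 \<le> a" "a + k - 1 \<le> n"
    and asc: "ascending (a - 1) (a + k) p"
  shows "rising_windows k n (adj_swap a p) \<subseteq> rising_windows k n p - {a}"
    and "a \<in> rising_windows k n p"
proof -
  have step: "p j < p (Suc j)" if "a - 1 \<le> j" "j < a + k" for j
    using asc that unfolding ascending_def by blast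
  show "a \<in> rising_windows k n p"
    using a step unfolding rising_windows_def ascending_def by auto
  show "rising_windows k n (adj_swap a p) \<subseteq> rising_windows k n p - {a}"
  proof
    fix i assume i: "i \<in> rising_windows k n (adj_swap a p)"
    have swapped: "adj_swap a p j < adj_swap a p (Suc j)" if "i \<le> j" "j < i + k - 1" for j
      using i that unfolding rising_windows_def ascending_def by blast
    have not_a: "\<not> (i \<le> a \<and> a < i + k - 1)"
      using swapped[of a] step[of a] k a by (auto simp: adj_swap_def)
    have "p j < p (Suc j)" if "i \<le> j" "j < i + k - 1" for j
    proof (cases "j \<in> {a - 1, a, Suc a}")
      case True
      then show ?thesis using not_a that step[of j] a k by auto
    next
      case False
      then show ?thesis using swapped[OF that] a by (auto simp: adj_swap_def split: if_splits)
    qed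
    moreover have "i \<noteq> a" using not_a k by auto
    ultimately show "i \<in> rising_windows k n p - {a}"
      using i unfolding rising_windows_def ascending_def by auto
  qed
qed

lemma Y_adj_swap_le:
  assumes "k \<ge> 2" "1 \<le> a" "a + k - 1 \<le> n" "ascending (a - 1) (a + k) p"
  shows "Y k n (adj_swap a p) + 1 \<le> Y k n p"
proof -
  note sub = rising_windows_adj_swap[OF assms]
  have "card (rising_windows k n (adj_swap a p)) \<le> card (rising_windows k n p - {a})"
    using sub(1) by (intro card_mono) (auto intro: finite_rising_windows)
  also have "\<dots> = card (rising_windows k n p) - 1"
    using sub(2) finite_rising_windows by simp
  finally have "card (rising_windows k n (adj_swap a p)) \<le> card (rising_windows k n p) - 1" .
  moreover have "card (rising_windows k n p) > 0"
    using sub(2) by (auto simp: card_gt_0_iff finite_rising_windows)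
  ultimately have "card (rising_windows k n (adj_swap a p)) + 1 \<le> card (rising_windows k n p)"
    by linarith
  then show ?thesis by (simp add: Y_eq_card_rising_windows)
qed

lemma finite_perms: "finite (perms n)"
  unfolding perms_def by (rule finite_permutations) simp

lemma card_perms: "card (perms n) = fact n"
  unfolding perms_def by (rule card_permutations) auto

lemma perms_nonempty: "perms n \<noteq> {}"
  unfolding perms_def using permutes_id by blast

lemma exists_sorting_permutation:
  fixes p :: "nat \<Rightarrow> nat"
  assumes inj: "inj_on p {l..u}"
  shows "\<exists>\<rho>. \<rho> permutes {l..u} \<and> (\<forall>x\<in>{l..u}. \<forall>y\<in>{l..u}. p x < p y \<longrightarrow> \<rho> x < \<rho> y)"
proof -
  define I where "I = {l..u}"
  define rank where "rank x = l + card {y\<in>I. p y < p x}" for x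
  define \<rho> where "\<rho> x = (if x \<in> I then rank x else x)" for x
  have mono: "\<rho> x < \<rho> y" if "x \<in> I" "y \<in> I" "p x < p y" for x y
  proof -
    have "{z\<in>I. p z < p x} \<subset> {z\<in>I. p z < p y}"
      using that by auto
    then have "card {z\<in>I. p z < p x} < card {z\<in>I. p z < p y}"
      by (intro psubset_card_mono) (simp add: I_def)
    then show ?thesis using that by (simp add: \<rho>_def rank_def)
  qed
  have "inj_on \<rho> I"
  proof (rule inj_onI)
    fix x y assume "x \<in> I" "y \<in> I" "\<rho> x = \<rho> y"
    then show "x = y"
      using mono inj unfolding I_def inj_on_def by (metis nat_neq_iff)
  qed
  moreover have "\<rho> ` I \<subseteq> I"
  proof
    fix z assume "z \<in> \<rho> ` I"
    then obtain x where x: "x \<in> I" "z = rank x" by (auto simp: \<rho>_def)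
    have "card {y\<in>I. p y < p x} \<le> card (I - {x})"
      by (intro card_mono) (auto simp: I_def)
    also have "\<dots> = u - l" using x by (simp add: I_def)
    finally show "z \<in> I" using x by (auto simp: I_def rank_def)
  qed
  ultimately have "bij_betw \<rho> I I"
    using endo_inj_surj[of I \<rho>] by (simp add: bij_betw_def I_def)
  then have "\<rho> permutes I"
    unfolding permutes_altdef by (auto simp: \<rho>_def)
  then show ?thesis using mono unfolding I_def by blast
qed

lemma permutes_ascending_outside:
  assumes "p permutes {1..n}" "j = 0 \<or> n \<le> j"
  shows "p j < p (Suc j)"
proof -
  have inside: "p x \<in> {1..n}" if "x \<in> {1..n}" for x
    using assms(1) that by (rule permutes_in_image[THEN iffD2])
  have outside: "p x = x" if "x \<notin> {1..n}" for x
    using assms(1) that by (rule permutes_not_in)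
  show ?thesis
  proof (cases "j = 0")
    case True
    then show ?thesis using inside[of 1] outside[of 0] outside[of 1] by fastforce
  next
    case False
    then show ?thesis using assms(2) inside[of j] outside[of j] outside[of "Suc j"] by fastforce
  qed
qed

lemma exists_ascending_rearrangement:
  assumes p: "p permutes {1..n}"
  shows "\<exists>\<rho>. \<rho> permutes {max 1 l..min n u} \<and> ascending l u (p \<circ> inv \<rho>)"
proof -
  define I where "I = {max 1 l..min n u}"
  have "inj_on p I" using permutes_inj[OF p] by (auto intro: inj_on_subset)
  then obtain \<rho> where \<rho>: "\<rho> permutes I"
    and sorts: "\<forall>x\<in>I. \<forall>y\<in>I. p x < p y \<longrightarrow> \<rho> x < \<rho> y"
    using exists_sorting_permutation unfolding I_def by blast
  have "inv \<rho> permutes {1..n}"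
    using permutes_subset[OF permutes_inv[OF \<rho>]] by (auto simp: I_def)
  then have q: "p \<circ> inv \<rho> permutes {1..n}" using p by (rule permutes_compose)
  have "(p \<circ> inv \<rho>) j < (p \<circ> inv \<rho>) (Suc j)" if "l \<le> j" "j < u" for j
  proof (cases "j = 0 \<or> n \<le> j")
    case True
    then show ?thesis using permutes_ascending_outside[OF q] by blast
  next
    case False
    then have jI: "j \<in> I" "Suc j \<in> I" using that by (auto simp: I_def)
    let ?x = "inv \<rho> j" and ?y = "inv \<rho> (Suc j)"
    have xy: "?x \<in> I" "?y \<in> I" "\<rho> ?x = j" "\<rho> ?y = Suc j"
      using jI permutes_in_image[OF permutes_inv[OF \<rho>]] permutes_inverses(1)[OF \<rho>] by auto
    then have "p ?x \<noteq> p ?y"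
      using permutes_inj[OF p] by (metis n_not_Suc_n injD)
    moreover have "\<not> p ?y < p ?x" using sorts xy by fastforce
    ultimately show ?thesis by simp
  qed
  then show ?thesis using \<rho> unfolding I_def ascending_def by blast
qed

text \<open>Every permutation is an ascending one composed with a permutation of the
  at most \<open>u - l + 1\<close> positions concerned.\<close>
lemma fact_le_card_ascending:
  "fact n \<le> fact (Suc (u - l)) * card {p \<in> perms n. ascending l u p}"
proof -
  define I where "I = {max 1 l..min n u}"
  define A where "A = {p \<in> perms n. ascending l u p}"
  have finA: "finite A" using finite_perms by (simp add: A_def)
  have finR: "finite {\<rho>. \<rho> permutes I}" by (simp add: I_def finite_permutations)
  have "perms n \<subseteq> (\<lambda>(q, \<rho>). q \<circ> \<rho>) ` (A \<times> {\<rho>. \<rho> permutes I})"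
  proof
    fix p assume p: "p \<in> perms n"
    then obtain \<rho> where \<rho>: "\<rho> permutes I" "ascending l u (p \<circ> inv \<rho>)"
      using exists_ascending_rearrangement unfolding perms_def I_def by blast
    have "inv \<rho> permutes {1..n}"
      using permutes_subset[OF permutes_inv[OF \<rho>(1)]] by (auto simp: I_def)
    then have "p \<circ> inv \<rho> \<in> A"
      using p \<rho>(2) by (auto simp: A_def perms_def intro: permutes_compose)
    moreover have "p = (p \<circ> inv \<rho>) \<circ> \<rho>"
      using permutes_inv_o(2)[OF \<rho>(1)] by (simp add: comp_assoc)
    ultimately show "p \<in> (\<lambda>(q, \<rho>). q \<circ> \<rho>) ` (A \<times> {\<rho>. \<rho> permutes I})"
      using \<rho>(1) by (auto intro!: image_eqI[where x="(p \<circ> inv \<rho>, \<rho>)"])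
  qed
  then have "card (perms n) \<le> card (A \<times> {\<rho>. \<rho> permutes I})"
    using finA finR by (meson card_image_le card_mono finite_SigmaI finite_imageI order_trans)
  also have "\<dots> = card A * fact (card I)"
    by (simp add: card_cartesian_product card_permutations I_def)
  also have "\<dots> \<le> card A * fact (Suc (u - l))"
    by (intro mult_le_mono2 fact_mono) (auto simp: I_def)
  finally show ?thesis by (simp add: card_perms A_def mult.commute)
qed

definition toggle :: "nat \<Rightarrow> nat \<Rightarrow> (nat \<Rightarrow> nat) \<Rightarrow> real" where
  "toggle k a p = of_bool (ascending (a - 1) (a + k) p)
                 - of_bool (ascending (a - 1) (a + k) (adj_swap a p))"

lemma toggle_adj_swap: "toggle k a (adj_swap a p) = - toggle k a p"
  by (simp add: toggle_def)

lemma toggle_adj_swap_far: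
  assumes "0 < k" "a + 2 < b \<or> b + k < a"
  shows "toggle k b (adj_swap a p) = toggle k b p"
proof -
  have "adj_swap b (adj_swap a p) = adj_swap a (adj_swap b p)"
    using assms by (intro adj_swap_commute) auto
  moreover have "ascending (b - 1) (b + k) (adj_swap a q) \<longleftrightarrow> ascending (b - 1) (b + k) q" for q
    by (rule ascending_adj_swap_far) (use assms in auto)
  ultimately show ?thesis by (simp add: toggle_def)
qed

lemma sum_perms_eq_0_if_adj_swap_odd:
  assumes "1 \<le> a" "Suc a \<le> n" "\<And>p. f (adj_swap a p) = - f p"
  shows "(\<Sum>p\<in>perms n. f p) = (0::real)"
proof -
  have "(\<Sum>p\<in>perms n. f p) = (\<Sum>p\<in>perms n. f (adj_swap a p))"
    by (rule sum_perms_adj_swap[OF assms(1,2), symmetric])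
  also have "\<dots> = - (\<Sum>p\<in>perms n. f p)" by (simp add: assms(3) sum_negf)
  finally show ?thesis by simp
qed

lemma sum_toggle:
  assumes "1 \<le> a" "Suc a \<le> n"
  shows "(\<Sum>p\<in>perms n. toggle k a p) = 0"
  using assms toggle_adj_swap by (rule sum_perms_eq_0_if_adj_swap_odd)

lemma sum_toggle_mult_toggle_far:
  assumes "0 < k" "1 \<le> a" "Suc a \<le> n" "a + 2 < b \<or> b + k < a"
  shows "(\<Sum>p\<in>perms n. toggle k a p * toggle k b p) = 0"
  using assms(2,3) by (rule sum_perms_eq_0_if_adj_swap_odd)
    (simp add: toggle_adj_swap toggle_adj_swap_far[OF assms(1,4)])

lemma toggle_squared:
  assumes "k \<ge> 1"
  shows "toggle k a p ^ 2 = of_bool (ascending (a - 1) (a + k) p)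
                          + of_bool (ascending (a - 1) (a + k) (adj_swap a p))"
proof -
  have "\<not> (ascending (a - 1) (a + k) p \<and> ascending (a - 1) (a + k) (adj_swap a p))"
    using not_ascending_adj_swap[of "a - 1" a "a + k"] assms by auto
  then show ?thesis by (auto simp: toggle_def)
qed

lemma sum_toggle_squared:
  assumes "k \<ge> 1" "1 \<le> a" "Suc a \<le> n"
  shows "(\<Sum>p\<in>perms n. toggle k a p ^ 2)
           = 2 * real (card {p \<in> perms n. ascending (a - 1) (a + k) p})"
proof -
  have "(\<Sum>p\<in>perms n. of_bool (ascending (a - 1) (a + k) (adj_swap a p)))
      = (\<Sum>p\<in>perms n. of_bool (ascending (a - 1) (a + k) p) :: real)"
    using sum_perms_adj_swap[OF assms(2,3)] by simp
  then show ?thesis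
    by (simp add: toggle_squared[OF assms(1)] sum.distrib finite_perms Int_def)
qed

text \<open>If the window around \<open>a\<close> ascends, the swap at \<open>a\<close> loses at least one rising window;
  if it ascends after the swap, the swap gains one. Hence \<open>(Y p - Y (adj_swap a p)) * toggle k a p\<close>
  dominates the indicator of the first event, and the swap symmetry halves its sum.\<close>
lemma card_ascending_le_sum_Y_mult_toggle:
  assumes k: "k \<ge> 2" and a: "1 \<le> a" "a + k - 1 \<le> n"
  shows "card {p \<in> perms n. ascending (a - 1) (a + k) p}
           \<le> 2 * (\<Sum>p\<in>perms n. Y k n p * toggle k a p)"
proof -
  let ?asc = "ascending (a - 1) (a + k)"
  have a': "Suc a \<le> n" using a k by simp
  have pointwise: "of_bool (?asc p) \<le> (Y k n p - Y k n (adj_swap a p)) * toggle k a p" for p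
  proof -
    consider "?asc p" | "?asc (adj_swap a p)" | "\<not> ?asc p" "\<not> ?asc (adj_swap a p)"
      by blast
    then show ?thesis
    proof cases
      case 1
      then have "\<not> ?asc (adj_swap a p)" using k by (intro not_ascending_adj_swap) auto
      then show ?thesis using 1 Y_adj_swap_le[OF k a 1] by (simp add: toggle_def)
    next
      case 2
      then have "\<not> ?asc p"
        using k not_ascending_adj_swap[of "a - 1" a "a + k" "adj_swap a p"] by auto
      then show ?thesis using 2 Y_adj_swap_le[OF k a 2] by (simp add: toggle_def)
    qed (simp add: toggle_def)
  qed
  have "(\<Sum>p\<in>perms n. Y k n p * toggle k a p)
      = (\<Sum>p\<in>perms n. Y k n (adj_swap a p) * toggle k a (adj_swap a p))"
    by (rule sum_perms_adj_swap[OF a(1) a', symmetric])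
  then have "2 * (\<Sum>p\<in>perms n. Y k n p * toggle k a p)
      = (\<Sum>p\<in>perms n. (Y k n p - Y k n (adj_swap a p)) * toggle k a p)"
    by (simp add: toggle_adj_swap sum_negf left_diff_distrib sum_subtractf)
  moreover have "(\<Sum>p\<in>perms n. of_bool (?asc p))
      \<le> (\<Sum>p\<in>perms n. (Y k n p - Y k n (adj_swap a p)) * toggle k a p)"
    by (rule sum_mono) (rule pointwise)
  ultimately show ?thesis by (simp add: finite_perms Int_def)
qed

lemma sum_square_sum_orthogonal:
  fixes h :: "'t \<Rightarrow> 'a \<Rightarrow> real"
  assumes "\<And>s t. s \<in> T \<Longrightarrow> t \<in> T \<Longrightarrow> s \<noteq> t \<Longrightarrow> (\<Sum>x\<in>P. h s x * h t x) = 0"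
  shows "(\<Sum>x\<in>P. (\<Sum>t\<in>T. h t x) ^ 2) = (\<Sum>t\<in>T. \<Sum>x\<in>P. h t x ^ 2)"
proof -
  have "(\<Sum>x\<in>P. (\<Sum>t\<in>T. h t x) ^ 2) = (\<Sum>s\<in>T. \<Sum>t\<in>T. \<Sum>x\<in>P. h s x * h t x)"
    by (simp add: power2_eq_square sum_product sum.swap[of _ P] sum.swap[of _ P T])
  also have "\<dots> = (\<Sum>s\<in>T. \<Sum>t\<in>T. if t = s then \<Sum>x\<in>P. h s x * h s x else 0)"
    by (intro sum.cong refl) (auto simp: assms)
  finally show ?thesis by (cases "finite T") (simp_all add: power2_eq_square)
qed

lemma sum_square_dev_ge_test:
  fixes Y Z :: "'a \<Rightarrow> real"
  assumes "(\<Sum>x\<in>P. Z x) = 0"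
  shows "2 * c * (\<Sum>x\<in>P. Y x * Z x) - c ^ 2 * (\<Sum>x\<in>P. Z x ^ 2) \<le> (\<Sum>x\<in>P. (Y x - \<mu>) ^ 2)"
proof -
  have "(Y x - \<mu> - c * Z x) ^ 2
      = (Y x - \<mu>) ^ 2 - 2 * c * (Y x * Z x) + 2 * c * \<mu> * Z x + c ^ 2 * Z x ^ 2" for x
    by (simp add: power2_eq_square algebra_simps)
  then have "(\<Sum>x\<in>P. (Y x - \<mu> - c * Z x) ^ 2)
      = (\<Sum>x\<in>P. (Y x - \<mu>) ^ 2) - 2 * c * (\<Sum>x\<in>P. Y x * Z x) + c ^ 2 * (\<Sum>x\<in>P. Z x ^ 2)"
    using assms by (simp add: sum.distrib sum_subtractf sum_distrib_left[symmetric])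
  moreover have "0 \<le> (\<Sum>x\<in>P. (Y x - \<mu> - c * Z x) ^ 2)" by (rule sum_nonneg) simp
  ultimately show ?thesis by linarith
qed

lemma variance_unif_perm:
  fixes f :: "(nat \<Rightarrow> nat) \<Rightarrow> real"
  shows "measure_pmf.variance (unif_perm n) f
           = (\<Sum>p\<in>perms n. (f p - (\<Sum>q\<in>perms n. f q) / fact n) ^ 2) / fact n"
  unfolding unif_perm_def integral_pmf_of_set[OF perms_nonempty finite_perms] card_perms
  by simp

lemma fact_div_le_card_ascending_window:
  assumes "1 \<le> a"
  shows "fact n / fact (k + 2) \<le> real (card {p \<in> perms n. ascending (a - 1) (a + k) p})"
proof -
  let ?c = "card {p \<in> perms n. ascending (a - 1) (a + k) p}"
  have "Suc (a + k - (a - 1)) = k + 2" using assms by simp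
  then have "fact n \<le> ?c * fact (k + 2)"
    using fact_le_card_ascending[of n "a + k" "a - 1"] by (simp only: mult.commute)
  then have "(fact n :: real) \<le> real ?c * fact (k + 2)"
    by (metis of_nat_fact of_nat_mono of_nat_mult)
  then show ?thesis by (rule pos_divide_le_eq[THEN iffD2, OF fact_gt_zero])
qed

lemma block_window_fits:
  assumes "k \<ge> 2" "2 * k * R \<le> n + k" "t < R"
  shows "1 \<le> 2 * t * k + 1" "2 * t * k + k \<le> n" "Suc (2 * t * k + 1) \<le> n"
proof -
  have "2 * k * Suc t \<le> n + k" using assms by (meson Suc_leI le_trans mult_le_mono2)
  moreover have "2 * k * Suc t = 2 * t * k + 2 * k" by simp
  ultimately show "1 \<le> 2 * t * k + 1" "2 * t * k + k \<le> n" "Suc (2 * t * k + 1) \<le> n"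
    using assms(1) by linarith+
qed

lemma block_windows_far:
  fixes k s t :: nat
  assumes "k \<ge> 2" "s \<noteq> t"
  shows "(2 * s * k + 1) + 2 < 2 * t * k + 1 \<or> (2 * t * k + 1) + k < 2 * s * k + 1"
proof -
  have spread: "2 * i * k + 2 * k \<le> 2 * j * k" if "i < j" for i j
  proof -
    have "2 * k * Suc i \<le> 2 * k * j" using that by (intro mult_le_mono2) simp
    moreover have "2 * k * Suc i = 2 * i * k + 2 * k" "2 * k * j = 2 * j * k" by simp_all
    ultimately show ?thesis by linarith
  qed
  show ?thesis using assms spread[of s t] spread[of t s] by linarith
qed

lemma sum_square_dev_Y_ge:
  assumes k: "k \<ge> 2" and fit: "2 * k * R \<le> n + k"
  shows "real R * fact n / fact (k + 2) \<le> 8 * (\<Sum>p\<in>perms n. (Y k n p - \<mu>) ^ 2)"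
proof -
  define a where "a t = 2 * t * k + 1" for t
  define A where "A t = real (card {p \<in> perms n. ascending (a t - 1) (a t + k) p})" for t
  define Z where "Z p = (\<Sum>t<R. toggle k (a t) p)" for p
  have a_fit: "1 \<le> a t" "a t + k - 1 \<le> n" "Suc (a t) \<le> n" if "t < R" for t
    using block_window_fits[OF k fit that] unfolding a_def by simp_all
  have far: "a s + 2 < a t \<or> a t + k < a s" if "s \<noteq> t" for s t
    unfolding a_def using block_windows_far[OF k that] .
  have sum_Z: "(\<Sum>p\<in>perms n. Z p) = 0"
    unfolding Z_def using sum_toggle a_fit(1,3) by (subst sum.swap) (simp add: sum.neutral)
  have sum_Y_Z: "(\<Sum>t<R. A t) \<le> 2 * (\<Sum>p\<in>perms n. Y k n p * Z p)"
  proof -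
    have "(\<Sum>t<R. A t) \<le> (\<Sum>t<R. 2 * (\<Sum>p\<in>perms n. Y k n p * toggle k (a t) p))"
      unfolding A_def using card_ascending_le_sum_Y_mult_toggle[OF k a_fit(1,2)]
      by (intro sum_mono) simp
    also have "\<dots> = 2 * (\<Sum>p\<in>perms n. Y k n p * Z p)"
      by (simp add: Z_def sum_distrib_left sum.swap[of _ "perms n"])
    finally show ?thesis .
  qed
  have sum_Z_squared: "(\<Sum>p\<in>perms n. Z p ^ 2) = 2 * (\<Sum>t<R. A t)"
  proof -
    have "(\<Sum>p\<in>perms n. Z p ^ 2) = (\<Sum>t<R. \<Sum>p\<in>perms n. toggle k (a t) p ^ 2)"
      unfolding Z_def using k a_fit far
      by (intro sum_square_sum_orthogonal sum_toggle_mult_toggle_far) auto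
    also have "\<dots> = (\<Sum>t<R. 2 * A t)"
      unfolding A_def by (intro sum.cong refl sum_toggle_squared) (use k a_fit in auto)
    finally show ?thesis by (simp add: sum_distrib_left)
  qed
  have "real R * fact n / fact (k + 2) \<le> (\<Sum>t<R. A t)"
    using sum_mono[of "{..<R}" "\<lambda>_. fact n / fact (k + 2)" A]
      fact_div_le_card_ascending_window[OF a_fit(1)] by (simp add: A_def)
  moreover have "(\<Sum>p\<in>perms n. Y k n p * Z p) / 2 - (\<Sum>p\<in>perms n. Z p ^ 2) / 16
      \<le> (\<Sum>p\<in>perms n. (Y k n p - \<mu>) ^ 2)"
    using sum_square_dev_ge_test[OF sum_Z, where c = "1/4" and Y = "Y k n" and \<mu> = \<mu>]
    by (simp add: power2_eq_square)
  ultimately show ?thesis using sum_Y_Z sum_Z_squared by linarith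
qed

lemma variance_Y_ge:
  assumes "k \<ge> 2" "2 * k * R \<le> n + k"
  shows "real R / (8 * fact (k + 2)) \<le> measure_pmf.variance (unif_perm n) (Y k n)"
proof -
  define V where "V = (\<Sum>p\<in>perms n. (Y k n p - (\<Sum>q\<in>perms n. Y k n q) / fact n) ^ 2)"
  define F where "F = (fact (k + 2) :: real)"
  have "real R * fact n / F \<le> 8 * V" unfolding V_def F_def by (rule sum_square_dev_Y_ge[OF assms])
  moreover have "F > 0" "(fact n :: real) > 0" by (simp_all add: F_def)
  ultimately show ?thesis unfolding variance_unif_perm V_def[symmetric] F_def[symmetric]
    by (simp add: field_simps)
qed

lemma le_three_mult_div:
  fixes k n :: nat
  assumes "0 < k" "k \<le> n"
  shows "n \<le> 3 * k * ((n + k) div (2 * k))"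
proof -
  define R where "R = (n + k) div (2 * k)"
  have "1 \<le> R"
    using div_le_mono[of "2 * k" "n + k" "2 * k"] assms by (simp add: R_def)
  moreover have "2 * k * R + (n + k) mod (2 * k) = n + k" unfolding R_def by (rule mult_div_mod_eq)
  moreover have "(n + k) mod (2 * k) < 2 * k" using assms by simp
  moreover have "k \<le> k * R" "3 * k * R = k * R + 2 * k * R" using \<open>1 \<le> R\<close> by simp_all
  ultimately show ?thesis unfolding R_def[symmetric] by linarith
qed

theorem proposition3p4:
  fixes k :: nat
  assumes "k \<ge> 2"
  shows "\<exists>c::real. c > 0 \<and>
           (\<forall>n. n \<ge> k \<longrightarrow>
              measure_pmf.variance (unif_perm n) (Y k n) \<ge> c * real n)"
proof (intro exI conjI allI impI)
  show "1 / (24 * real k * fact (k + 2)) > (0::real)" using assms by simp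
  fix n assume "n \<ge> k"
  define R where "R = (n + k) div (2 * k)"
  have "n \<le> 3 * k * R" unfolding R_def using assms \<open>n \<ge> k\<close> by (intro le_three_mult_div) auto
  then have "real n \<le> 3 * real k * real R" by (metis of_nat_mono of_nat_mult of_nat_numeral)
  moreover have "(fact (k + 2) :: real) > 0" "real k > 0" using assms by simp_all
  ultimately have "real n / (24 * real k * fact (k + 2)) \<le> real R / (8 * fact (k + 2))"
    by (simp add: field_simps del: fact_Suc)
  also have "\<dots> \<le> measure_pmf.variance (unif_perm n) (Y k n)"
    by (rule variance_Y_ge[OF assms]) (simp add: R_def)
  finally show "1 / (24 * real k * fact (k + 2)) * real n
      \<le> measure_pmf.variance (unif_perm n) (Y k n)"
    by (simp only: times_divide_eq_left mult_1)
qed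

end
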